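(* Let $f$ be a real valued function defined on a subset $D$ of $\mathbb{R}$ and let $x\in D$. The set of sequential cord derivatives of $f$ at $x$ is a closed subset of $\overline{\mathbb{R}}$.
   Context: $\overline{\mathbb{R}}=\mathbb{R}\cup\{\pm\infty\}$. $L\in\overline{\mathbb{R}}$ is a sequential cord derivative of $f$ at $x$ if there are sequences $h_n>0$, $k_n>0$ with $h_n\to0$, $k_n\to0$, $x+h_n\in D$, $x-k_n\in D$ for all $n$, and $\frac{f(x+h_n)-f(x-k_n)}{h_n+k_n}\to L$ as $n\to\infty$. A set $S\subseteq\overline{\mathbb{R}}$ is closed if every $L\in\overline{\mathbb{R}}$ for which there is a sequence of real numbers $L_n\in S\cap\mathbb{R}$ with $L_n\to L$ belongs to $S$. *)

theory Defs
  imports "HOL-Analysis.Analysis" "HOL-Library.Extended_Real"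
begin

definition seq_cord_deriv :: "(real \<Rightarrow> real) \<Rightarrow> real set \<Rightarrow> real \<Rightarrow> ereal \<Rightarrow> bool" where
  "seq_cord_deriv f D x L \<longleftrightarrow>
     (\<exists>h k :: nat \<Rightarrow> real.
        (\<forall>n. h n > 0 \<and> k n > 0 \<and> x + h n \<in> D \<and> x - k n \<in> D) \<and>
        h \<longlonglongrightarrow> 0 \<and> k \<longlonglongrightarrow> 0 \<and>
        ((\<lambda>n. ereal ((f (x + h n) - f (x - k n)) / (h n + k n))) \<longlonglongrightarrow> L))"

definition seq_cord_derivs :: "(real \<Rightarrow> real) \<Rightarrow> real set \<Rightarrow> real \<Rightarrow> ereal set" where
  "seq_cord_derivs f D x = {L. seq_cord_deriv f D x L}"

text \<open>Closedness in the extended reals as in the paper: limits of sequences of real members.\<close>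
definition ereal_seq_closed :: "ereal set \<Rightarrow> bool" where
  "ereal_seq_closed S \<longleftrightarrow>
     (\<forall>L (Ls :: nat \<Rightarrow> real). (\<forall>n. ereal (Ls n) \<in> S) \<and> ((\<lambda>n. ereal (Ls n)) \<longlonglongrightarrow> L) \<longrightarrow> L \<in> S)"

end

theory Submission
  imports Defs
begin

text \<open>A sequential cord derivative is a sequential limit value of the difference quotient
  \<open>(h, k) \<mapsto> (f (x + h) - f (x - k)) / (h + k)\<close> at \<open>(0, 0)\<close>, approached from within the
  admissible pairs. In first countable spaces such sets of limit values are closed by a
  diagonal argument: for the \<open>m\<close>-th neighbourhoods of the point and of the limit, pick one
  term of a sequence realising a nearby limit value.\<close>

definition sequential_limit_values ::
    "('a::topological_space \<Rightarrow> 'b::topological_space) \<Rightarrow> 'a set \<Rightarrow> 'a \<Rightarrow> 'b set" where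
  "sequential_limit_values g S a =
     {l. \<exists>p. (\<forall>i. p i \<in> S) \<and> p \<longlonglongrightarrow> a \<and> (\<lambda>i. g (p i)) \<longlonglongrightarrow> l}"

lemma sequential_limit_values_near:
  assumes "l \<in> sequential_limit_values g S a" "open U" "a \<in> U" "open V" "l \<in> V"
  shows "\<exists>q\<in>S. q \<in> U \<and> g q \<in> V"
proof -
  obtain p where p: "\<And>i. p i \<in> S" "p \<longlonglongrightarrow> a" "(\<lambda>i. g (p i)) \<longlonglongrightarrow> l"
    using assms(1) unfolding sequential_limit_values_def by blast
  have "eventually (\<lambda>i. p i \<in> U \<and> g (p i) \<in> V) sequentially"
    using p(2,3) assms(2-5) by (auto simp: tendsto_def intro: eventually_conj)
  then obtain i where "p i \<in> U" "g (p i) \<in> V"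
    by (auto simp: eventually_sequentially)
  then show ?thesis
    using p(1) by blast
qed

lemma closed_sequential_limit_values:
  fixes g :: "'a::first_countable_topology \<Rightarrow> 'b::first_countable_topology"
  shows "closed (sequential_limit_values g S a)"
  unfolding closed_sequential_limits
proof (intro allI impI, elim conjE)
  fix L :: "nat \<Rightarrow> 'b" and l :: 'b
  assume L: "\<forall>n. L n \<in> sequential_limit_values g S a" and "L \<longlonglongrightarrow> l"
  obtain A :: "nat \<Rightarrow> 'a set" where A: "\<And>m. open (A m)" "\<And>m. a \<in> A m"
    and A_tendsto: "\<And>q. \<forall>m. q m \<in> A m \<Longrightarrow> q \<longlonglongrightarrow> a"
    by (rule first_countable_topology_class.countable_basis[where x=a]) blast
  obtain B :: "nat \<Rightarrow> 'b set" where B: "\<And>m. open (B m)" "\<And>m. l \<in> B m"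
    and B_tendsto: "\<And>y. \<forall>m. y m \<in> B m \<Longrightarrow> y \<longlonglongrightarrow> l"
    by (rule first_countable_topology_class.countable_basis[where x=l]) blast
  have "\<exists>q\<in>S. q \<in> A m \<and> g q \<in> B m" for m
  proof -
    have "eventually (\<lambda>n. L n \<in> B m) sequentially"
      using \<open>L \<longlonglongrightarrow> l\<close> B by (simp add: tendsto_def)
    then obtain n where "L n \<in> B m"
      by (auto simp: eventually_sequentially)
    then show ?thesis
      using L A B by (intro sequential_limit_values_near) auto
  qed
  then obtain q where q: "\<And>m. q m \<in> S" "\<And>m. q m \<in> A m" "\<And>m. g (q m) \<in> B m"
    by metis
  have "q \<longlonglongrightarrow> a" "(\<lambda>m. g (q m)) \<longlonglongrightarrow> l"
    using q by (auto intro: A_tendsto B_tendsto)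
  then show "l \<in> sequential_limit_values g S a"
    unfolding sequential_limit_values_def using q(1) by blast
qed

lemma ereal_seq_closed_if_closed:
  assumes "closed S"
  shows "ereal_seq_closed S"
  unfolding ereal_seq_closed_def
proof (intro allI impI, elim conjE)
  fix L and Ls :: "nat \<Rightarrow> real"
  assume "\<forall>n. ereal (Ls n) \<in> S" "(\<lambda>n. ereal (Ls n)) \<longlonglongrightarrow> L"
  then show "L \<in> S"
    using assms unfolding closed_sequential_limits
    by (elim allE[of _ "\<lambda>n. ereal (Ls n)"] allE[of _ L]) blast
qed

lemma seq_cord_derivs_eq_sequential_limit_values:
  "seq_cord_derivs f D x =
     sequential_limit_values (\<lambda>(h, k). ereal ((f (x + h) - f (x - k)) / (h + k)))
       {(h, k). h > 0 \<and> k > 0 \<and> x + h \<in> D \<and> x - k \<in> D} (0, 0)"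
  (is "_ = ?values")
proof (intro set_eqI iffI)
  fix L
  assume "L \<in> seq_cord_derivs f D x"
  then obtain h k where "\<forall>n. h n > 0 \<and> k n > 0 \<and> x + h n \<in> D \<and> x - k n \<in> D"
    "h \<longlonglongrightarrow> 0" "k \<longlonglongrightarrow> 0"
    "(\<lambda>n. ereal ((f (x + h n) - f (x - k n)) / (h n + k n))) \<longlonglongrightarrow> L"
    unfolding seq_cord_derivs_def seq_cord_deriv_def by blast
  then show "L \<in> ?values"
    unfolding sequential_limit_values_def
    by (intro CollectI exI[of _ "\<lambda>n. (h n, k n)"]) (auto intro: tendsto_Pair)
next
  fix L
  assume "L \<in> ?values"
  then obtain p where p: "\<forall>i. p i \<in> {(h, k). h > 0 \<and> k > 0 \<and> x + h \<in> D \<and> x - k \<in> D}"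
    "p \<longlonglongrightarrow> (0, 0)"
    "(\<lambda>i. ereal ((f (x + fst (p i)) - f (x - snd (p i))) / (fst (p i) + snd (p i)))) \<longlonglongrightarrow> L"
    unfolding sequential_limit_values_def by (auto simp: case_prod_beta)
  have "(\<lambda>i. fst (p i)) \<longlonglongrightarrow> 0" "(\<lambda>i. snd (p i)) \<longlonglongrightarrow> 0"
    using tendsto_fst[OF p(2)] tendsto_snd[OF p(2)] by simp_all
  then show "L \<in> seq_cord_derivs f D x"
    unfolding seq_cord_derivs_def seq_cord_deriv_def
    using p(1,3) by (intro CollectI exI[of _ "\<lambda>i. fst (p i)", OF exI[of _ "\<lambda>i. snd (p i)"]])
      (auto simp: case_prod_beta)
qed

theorem theorem3p4:
  fixes f :: "real \<Rightarrow> real" and D :: "real set" and x :: real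
  assumes "x \<in> D"
  shows "ereal_seq_closed (seq_cord_derivs f D x)"
  unfolding seq_cord_derivs_eq_sequential_limit_values
  by (intro ereal_seq_closed_if_closed closed_sequential_limit_values)

end
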